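(* Let $\Omega\subseteq\mathbb{R}^d$ be a compact convex set with non-empty interior, and let $\mu_0,\mu_1$ be probability measures on $\Omega$ with Lebesgue densities $p_0,p_1$; let $v(t,z)=\mathbb{E}[X_1-X_0\mid(1-t)X_0+tX_1=z]$ for independent $X_0\sim\mu_0$, $X_1\sim\mu_1$. Then $$\sup_{t\in[0,1]}\|v(t,z)\|\le\mathrm{diam}(\Omega)\quad\text{for all }z\in\Omega^\circ.$$ If moreover $p_0,p_1$ are continuous, uniformly bounded and bounded away from zero on $\Omega$, with $\underline{\mathfrak p}=\inf_{x\in\Omega}\min\{p_0(x),p_1(x)\}$ and $\overline{\mathfrak p}=\sup_{x\in\Omega}\max\{p_0(x),p_1(x)\}$, then for all $t\in[0,1]$ and $\varepsilon,\eta>0$, $$\sup_{z,z'\in\Omega^{-\varepsilon},\ \|z-z'\|\le\eta}\|v(t,z)-v(t,z')\|\le\mathfrak L_1\omega(\eta)+\mathfrak L_2(\varepsilon)\eta,$$ where $\mathfrak L_1=9\,\mathrm{diam}(\Omega)$ and $$\mathfrak L_2(\varepsilon)=\frac{3\,\mathrm{diam}(\Omega)}{\omega^{-1}(1)}+\frac{1}{\varepsilon^2}\frac{\overline{\mathfrak p}^2}{\underline{\mathfrak p}^2}3d\,5^{d+1}\mathrm{diam}^2(\Omega).$$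
   Context: $\omega(\eta)=\sup_{z,z'\in\Omega,\|z-z'\|\le\eta}\max\{|p_0(z)/p_0(z')-1|,|p_1(z)/p_1(z')-1|\}$ for $\eta\in[0,\mathrm{diam}(\Omega)]$, and $\omega^{-1}$ denotes its inverse. $\Omega^{-\varepsilon}=\{x\in\mathbb{R}^d:\mathcal{B}(x,\varepsilon)\subseteq\Omega\}$ with $\mathcal{B}(x,\varepsilon)$ the closed Euclidean ball. For $t\in(0,1)$ and $z\in\Omega^\circ$, $v(t,z)=\frac{\int_{S_t(z)}\delta p_0(z-t\delta)p_1(z+(1-t)\delta)d\delta}{\int_{S_t(z)}p_0(z-t\delta)p_1(z+(1-t)\delta)d\delta}$ with $S_t(z)=\{\delta:z-t\delta\in\Omega,\ z+(1-t)\delta\in\Omega\}$. *)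

theory Defs
  imports "HOL-Analysis.Analysis"
begin

definition S_set :: "'a::euclidean_space set \<Rightarrow> real \<Rightarrow> 'a \<Rightarrow> 'a set" where
  "S_set \<Omega> t z = {\<delta>. z - t *\<^sub>R \<delta> \<in> \<Omega> \<and> z + (1 - t) *\<^sub>R \<delta> \<in> \<Omega>}"

text \<open>The velocity field v(t,z), given by the explicit ratio-of-integrals formula.\<close>
definition vfield :: "'a::euclidean_space set \<Rightarrow> ('a \<Rightarrow> real) \<Rightarrow> ('a \<Rightarrow> real) \<Rightarrow> real \<Rightarrow> 'a \<Rightarrow> 'a" where
  "vfield \<Omega> p0 p1 t z =
     (1 / (LINT \<delta>:S_set \<Omega> t z|lborel. p0 (z - t *\<^sub>R \<delta>) * p1 (z + (1 - t) *\<^sub>R \<delta>))) *\<^sub>R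
     (LINT \<delta>:S_set \<Omega> t z|lborel. (p0 (z - t *\<^sub>R \<delta>) * p1 (z + (1 - t) *\<^sub>R \<delta>)) *\<^sub>R \<delta>)"

definition omega :: "'a::euclidean_space set \<Rightarrow> ('a \<Rightarrow> real) \<Rightarrow> ('a \<Rightarrow> real) \<Rightarrow> real \<Rightarrow> real" where
  "omega \<Omega> p0 p1 \<eta> =
     Sup ((\<lambda>(z, z'). max \<bar>p0 z / p0 z' - 1\<bar> \<bar>p1 z / p1 z' - 1\<bar>) `
          {(z, z'). z \<in> \<Omega> \<and> z' \<in> \<Omega> \<and> norm (z - z') \<le> \<eta>})"

definition omega_inv1 :: "'a::euclidean_space set \<Rightarrow> ('a \<Rightarrow> real) \<Rightarrow> ('a \<Rightarrow> real) \<Rightarrow> real" where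
  "omega_inv1 \<Omega> p0 p1 = Sup {\<eta>. 0 \<le> \<eta> \<and> \<eta> \<le> diameter \<Omega> \<and> omega \<Omega> p0 p1 \<eta> \<le> 1}"

definition inner_set :: "'a::euclidean_space set \<Rightarrow> real \<Rightarrow> 'a set" where
  "inner_set \<Omega> \<epsilon> = {x. cball x \<epsilon> \<subseteq> \<Omega>}"

definition is_density_on :: "'a::euclidean_space set \<Rightarrow> ('a \<Rightarrow> real) \<Rightarrow> bool" where
  "is_density_on \<Omega> p \<longleftrightarrow> p \<in> borel_measurable lborel \<and> (\<forall>x\<in>\<Omega>. 0 \<le> p x)
     \<and> set_integrable lborel \<Omega> p \<and> (LINT x:\<Omega>|lborel. p x) = 1"

end

theory Submission
  imports Defs
begin

(*
  v(t,z) is the barycentre of the weight g_z(\<delta>) = p0(z - t\<delta>) p1(z + (1 - t)\<delta>) on the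
  displacement set S_t(z), and every \<delta> in S_t(z) is the difference of two points of \<Omega>; this
  gives norm v \<le> diam \<Omega>.

  For z, z' in \<Omega>^{-\<epsilon>} with norm (z - z') \<le> \<eta> \<le> \<epsilon>/2, convexity gives
  (1 - \<eta>/\<epsilon>) S_t(z) \<subseteq> S_t(z') and vice versa, so by Bernoulli's inequality the symmetric
  difference of S_t(z) and S_t(z') has measure at most d (\<eta>/\<epsilon>) (1 + 2^d) |S_t(z)|.
  On S_t(z) \<inter> S_t(z') the weights differ by the relative error 2\<omega> + \<omega>^2, \<omega> = \<omega>(\<eta>).
  Since the difference of two barycentres is at most 2 diam \<Omega> times the L1 distance of the
  weights divided by the mass \<ge> plo^2 |S_t(z)|, this yields the estimate.  The cases
  \<omega>(\<eta>) > 1 and \<eta> > \<epsilon>/2 are absorbed by the trivial bound 2 diam \<Omega>.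
*)

lemma norm_le_diameter_if_mem_S_set:
  assumes "bounded \<Omega>" "\<delta> \<in> S_set \<Omega> t z"
  shows "norm \<delta> \<le> diameter \<Omega>"
proof -
  have "dist (z + (1 - t) *\<^sub>R \<delta>) (z - t *\<^sub>R \<delta>) \<le> diameter \<Omega>"
    using assms by (intro diameter_bounded_bound) (auto simp: S_set_def)
  moreover have "dist (z + (1 - t) *\<^sub>R \<delta>) (z - t *\<^sub>R \<delta>) = norm \<delta>"
    by (simp add: dist_norm algebra_simps)
  ultimately show ?thesis by simp
qed

lemma compact_S_set:
  assumes "compact \<Omega>"
  shows "compact (S_set \<Omega> t z)"
proof -
  have "S_set \<Omega> t z = (\<lambda>\<delta>. z - t *\<^sub>R \<delta>) -` \<Omega> \<inter> (\<lambda>\<delta>. z + (1 - t) *\<^sub>R \<delta>) -` \<Omega>"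
    by (auto simp: S_set_def)
  then have "closed (S_set \<Omega> t z)"
    using compact_imp_closed[OF assms]
    by (auto intro!: closed_Int continuous_closed_vimage continuous_intros)
  moreover have "bounded (S_set \<Omega> t z)"
    using norm_le_diameter_if_mem_S_set[OF compact_imp_bounded[OF assms]]
    by (auto simp: bounded_iff)
  ultimately show ?thesis
    by (simp add: compact_eq_bounded_closed)
qed

lemma sets_lborel_S_set: "compact \<Omega> \<Longrightarrow> S_set \<Omega> t z \<in> sets lborel"
  using compact_S_set[of \<Omega> t z] by (simp add: borel_compact)

lemma cball_subset_S_set:
  assumes "cball z \<epsilon> \<subseteq> \<Omega>" "0 \<le> t" "t \<le> 1"
  shows "cball 0 \<epsilon> \<subseteq> S_set \<Omega> t z"
proof
  fix \<delta> :: 'a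
  assume "\<delta> \<in> cball 0 \<epsilon>"
  then have "norm \<delta> \<le> \<epsilon>" by simp
  then have "norm (t *\<^sub>R \<delta>) \<le> \<epsilon>" "norm ((1 - t) *\<^sub>R \<delta>) \<le> \<epsilon>"
    using assms(2,3) by (auto intro: order_trans[OF mult_left_le_one_le])
  then show "\<delta> \<in> S_set \<Omega> t z"
    using assms(1) by (auto simp: S_set_def dist_norm subset_iff)
qed

text \<open>The point \<open>w = z + (z' - z) / (1 - l)\<close> lies in \<open>cball z \<epsilon>\<close>, and the homothety with
  centre \<open>w\<close> and ratio \<open>l\<close> maps the endpoints \<open>z - t \<delta>\<close>, \<open>z + (1 - t) \<delta>\<close> to
  \<open>z' - t (l \<delta>)\<close>, \<open>z' + (1 - t) (l \<delta>)\<close>; convexity keeps them in \<open>\<Omega>\<close>.\<close>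
lemma scaleR_mem_S_set:
  assumes "convex \<Omega>" "cball z \<epsilon> \<subseteq> \<Omega>" "0 \<le> l" "l \<le> 1" "norm (z' - z) \<le> (1 - l) * \<epsilon>"
    and "\<delta> \<in> S_set \<Omega> t z"
  shows "l *\<^sub>R \<delta> \<in> S_set \<Omega> t z'"
proof (cases "l = 1")
  case True
  then show ?thesis using assms(5,6) by simp
next
  case False
  then have l1: "l < 1" using assms(4) by simp
  define w where "w = z + (1 / (1 - l)) *\<^sub>R (z' - z)"
  have "norm (w - z) = norm (z' - z) / (1 - l)"
    using l1 by (simp add: w_def)
  also have "\<dots> \<le> \<epsilon>"
    using l1 assms(5) by (simp add: divide_le_eq mult.commute)
  finally have "w \<in> \<Omega>"
    using assms(2) by (auto simp: dist_norm norm_minus_commute)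
  have w: "(1 - l) *\<^sub>R w = z' - l *\<^sub>R z"
    using l1 by (simp add: w_def algebra_simps)
  have ends: "z - t *\<^sub>R \<delta> \<in> \<Omega>" "z + (1 - t) *\<^sub>R \<delta> \<in> \<Omega>"
    using assms(6) by (auto simp: S_set_def)
  have "l *\<^sub>R (z - t *\<^sub>R \<delta>) + (1 - l) *\<^sub>R w \<in> \<Omega>"
       "l *\<^sub>R (z + (1 - t) *\<^sub>R \<delta>) + (1 - l) *\<^sub>R w \<in> \<Omega>"
    using convexD[OF assms(1) ends(1) \<open>w \<in> \<Omega>\<close>, of l "1 - l"]
      convexD[OF assms(1) ends(2) \<open>w \<in> \<Omega>\<close>, of l "1 - l"] assms(3,4) by simp_all
  moreover have "l *\<^sub>R (z - t *\<^sub>R \<delta>) + (1 - l) *\<^sub>R w = z' - t *\<^sub>R (l *\<^sub>R \<delta>)"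
    "l *\<^sub>R (z + (1 - t) *\<^sub>R \<delta>) + (1 - l) *\<^sub>R w = z' + (1 - t) *\<^sub>R (l *\<^sub>R \<delta>)"
    unfolding w by (simp_all add: algebra_simps)
  ultimately show ?thesis by (simp add: S_set_def)
qed

lemma measure_lborel_scaleR_image:
  fixes S :: "'a::euclidean_space set"
  assumes "compact S" "0 < l"
  shows "measure lborel ((*\<^sub>R) l ` S) = l ^ DIM('a) * measure lborel S"
proof -
  have "compact ((*\<^sub>R) l ` S)"
    using assms(1) by (intro compact_continuous_image) (auto intro!: continuous_intros)
  moreover have "measure lebesgue ((\<lambda>x. l *\<^sub>R x + 0) ` S) = \<bar>l\<bar> ^ DIM('a) * measure lebesgue S"
    by (rule measure_lebesgue_affine)
  ultimately show ?thesis
    using assms by (simp add: borel_compact)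
qed

lemma measure_Diff_le_if_scaled_subset:
  fixes S T :: "'a::euclidean_space set"
  assumes "compact S" "T \<in> sets lborel" "0 < l" "(*\<^sub>R) l ` S \<subseteq> S \<inter> T"
  shows "measure lborel (S - T) \<le> (1 - l ^ DIM('a)) * measure lborel S"
proof -
  have "compact ((*\<^sub>R) l ` S)"
    using assms(1) by (intro compact_continuous_image) (auto intro!: continuous_intros)
  then have lS: "(*\<^sub>R) l ` S \<in> fmeasurable lborel"
    by (rule fmeasurable_compact)
  have S: "S \<in> fmeasurable lborel"
    using assms(1) by (rule fmeasurable_compact)
  have "measure lborel (S - T) \<le> measure lborel (S - (*\<^sub>R) l ` S)"
    using assms(2,4) S lS by (intro measure_mono_fmeasurable fmeasurable_Diff) auto
  also have "\<dots> = measure lborel S - measure lborel ((*\<^sub>R) l ` S)"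
    using assms(4) S lS by (intro measure_Diff) (auto simp: fmeasurable_def)
  finally show ?thesis
    using measure_lborel_scaleR_image[OF assms(1,3)] by (simp add: algebra_simps)
qed

lemma measure_sym_diff_le_if_scaled_subset:
  fixes S T :: "'a::euclidean_space set"
  assumes "compact S" "compact T" "1/2 \<le> l" "l \<le> 1"
    and "(*\<^sub>R) l ` S \<subseteq> S \<inter> T" "(*\<^sub>R) l ` T \<subseteq> T \<inter> S"
  shows "measure lborel (S - T) + measure lborel (T - S)
    \<le> (1 - l ^ DIM('a)) * (1 + 2 ^ DIM('a)) * measure lborel S"
proof -
  define d where "d = DIM('a)"
  have "0 < l"
    using assms(3) by simp
  have "measure lborel (S - T) \<le> (1 - l ^ d) * measure lborel S"
    and "measure lborel (T - S) \<le> (1 - l ^ d) * measure lborel T"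
    using assms measure_Diff_le_if_scaled_subset[of S T l] measure_Diff_le_if_scaled_subset[of T S l] \<open>0 < l\<close>
    by (auto simp: d_def borel_compact)
  moreover have "measure lborel T \<le> 2 ^ d * measure lborel S"
  proof -
    have "compact ((*\<^sub>R) l ` T)"
      using assms(2) by (intro compact_continuous_image) (auto intro!: continuous_intros)
    then have "measure lborel ((*\<^sub>R) l ` T) \<le> measure lborel S"
      using assms(1,6) by (intro measure_mono_fmeasurable) (auto simp: borel_compact fmeasurable_compact)
    then have "l ^ d * measure lborel T \<le> measure lborel S"
      using measure_lborel_scaleR_image[OF assms(2) \<open>0 < l\<close>] by (simp add: d_def)
    moreover have "(1/2) ^ d * measure lborel T \<le> l ^ d * measure lborel T"
      using assms(3) by (intro mult_right_mono power_mono) auto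
    ultimately have "measure lborel T / 2 ^ d \<le> measure lborel S"
      by (simp add: power_divide)
    then show ?thesis
      by (simp add: divide_le_eq mult.commute)
  qed
  moreover have "0 \<le> 1 - l ^ d"
    using assms(3,4) by (simp add: power_le_one)
  ultimately have "measure lborel (S - T) + measure lborel (T - S)
      \<le> (1 - l ^ d) * measure lborel S + (1 - l ^ d) * (2 ^ d * measure lborel S)"
    by (meson add_mono mult_left_mono order_trans)
  then show ?thesis
    by (simp add: d_def algebra_simps)
qed

lemma measure_S_set_sym_diff_le:
  fixes \<Omega> :: "'a::euclidean_space set"
  assumes "compact \<Omega>" "convex \<Omega>" "cball z \<epsilon> \<subseteq> \<Omega>" "cball z' \<epsilon> \<subseteq> \<Omega>"
    and "norm (z - z') \<le> \<eta>" "0 < \<eta>" "\<eta> \<le> \<epsilon> / 2"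
  shows "measure lborel (S_set \<Omega> t z - S_set \<Omega> t z') + measure lborel (S_set \<Omega> t z' - S_set \<Omega> t z)
     \<le> (real DIM('a) * \<eta> / \<epsilon>) * (1 + 2 ^ DIM('a)) * measure lborel (S_set \<Omega> t z)"
proof -
  define S S' where "S = S_set \<Omega> t z" and "S' = S_set \<Omega> t z'"
  define l where "l = 1 - \<eta> / \<epsilon>"
  have l: "1/2 \<le> l" "l \<le> 1" "(1 - l) * \<epsilon> = \<eta>"
    using assms(6,7) by (auto simp: l_def field_simps)
  have "l *\<^sub>R \<delta> \<in> S \<inter> S'" if "\<delta> \<in> S" for \<delta>
    using that l assms(5,6) scaleR_mem_S_set[OF assms(2,3), of l z \<delta> t]
      scaleR_mem_S_set[OF assms(2,3), of l z' \<delta> t] by (simp add: S_def S'_def norm_minus_commute)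
  moreover have "l *\<^sub>R \<delta> \<in> S' \<inter> S" if "\<delta> \<in> S'" for \<delta>
    using that l assms(5,6) scaleR_mem_S_set[OF assms(2,4), of l z' \<delta> t]
      scaleR_mem_S_set[OF assms(2,4), of l z \<delta> t] by (simp add: S_def S'_def)
  moreover have "compact S" "compact S'"
    unfolding S_def S'_def using compact_S_set assms(1) by auto
  ultimately have "measure lborel (S - S') + measure lborel (S' - S)
      \<le> (1 - l ^ DIM('a)) * (1 + 2 ^ DIM('a)) * measure lborel S"
    using l by (intro measure_sym_diff_le_if_scaled_subset) auto
  also have "\<dots> \<le> (real DIM('a) * \<eta> / \<epsilon>) * (1 + 2 ^ DIM('a)) * measure lborel S"
    using Bernoulli_inequality[of "- (\<eta> / \<epsilon>)" "DIM('a)"] assms(6,7)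
    by (intro mult_right_mono) (auto simp: l_def)
  finally show ?thesis
    unfolding S_def S'_def .
qed

text \<open>Junk value \<open>0\<close> when \<open>g\<close> is not integrable or has integral \<open>0\<close>.\<close>
definition barycentre :: "('a::euclidean_space \<Rightarrow> real) \<Rightarrow> 'a" where
  "barycentre g = (1 / integral\<^sup>L lborel g) *\<^sub>R integral\<^sup>L lborel (\<lambda>x. g x *\<^sub>R x)"

lemma integrable_scaleR_if_support_bounded:
  fixes g :: "'a::euclidean_space \<Rightarrow> real"
  assumes "integrable lborel g" "\<And>x. g x \<noteq> 0 \<Longrightarrow> norm x \<le> R"
  shows "integrable lborel (\<lambda>x. g x *\<^sub>R x)"
proof (rule Bochner_Integration.integrable_bound)
  show "integrable lborel (\<lambda>x. R * g x)"
    using assms(1) by simp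
  show "(\<lambda>x. g x *\<^sub>R x) \<in> borel_measurable lborel"
    using borel_measurable_integrable[OF assms(1)] by measurable
  have "norm (g x *\<^sub>R x) \<le> norm (R * g x)" for x
    using assms(2)[of x] by (cases "g x = 0") (auto simp: abs_mult mult_right_mono)
  then show "AE x in lborel. norm (g x *\<^sub>R x) \<le> norm (R * g x)"
    by simp
qed

lemma norm_barycentre_le:
  fixes g :: "'a::euclidean_space \<Rightarrow> real"
  assumes "\<And>x. 0 \<le> g x" "\<And>x. g x \<noteq> 0 \<Longrightarrow> norm x \<le> R" "0 \<le> R"
  shows "norm (barycentre g) \<le> R"
proof (cases "integrable lborel g")
  case True
  have "g x * norm x \<le> R * g x" for x
    using assms(1,2)[of x] by (cases "g x = 0") (auto simp: mult.commute mult_right_mono)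
  then have "norm (integral\<^sup>L lborel (\<lambda>x. g x *\<^sub>R x)) \<le> integral\<^sup>L lborel (\<lambda>x. R * g x)"
    using True integrable_scaleR_if_support_bounded[OF True assms(2)] assms(1)
    by (intro Bochner_Integration.integral_norm_bound_integral)
       (auto simp: mult_right_mono simp del: integral_mult_right_zero)
  moreover have "0 \<le> integral\<^sup>L lborel g"
    using assms(1) by (simp add: integral_nonneg_AE)
  ultimately show ?thesis
    using assms(3)
    by (cases "integral\<^sup>L lborel g = 0") (auto simp: barycentre_def divide_le_eq mult.commute)
next
  case False
  then show ?thesis
    using assms(3) by (simp add: barycentre_def not_integrable_integral_eq)
qed

text \<open>Since \<open>\<integral> g' (\<delta> - barycentre g') = 0\<close>, the difference of the barycentres is
  \<open>(1 / \<integral> g) \<integral> (g - g') (\<delta> - barycentre g')\<close>.\<close>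
lemma norm_barycentre_diff_le:
  fixes g g' :: "'a::euclidean_space \<Rightarrow> real"
  assumes g: "integrable lborel g" "0 < integral\<^sup>L lborel g" "\<And>x. g x \<noteq> 0 \<Longrightarrow> norm x \<le> R"
    and g': "integrable lborel g'" "0 < integral\<^sup>L lborel g'" "\<And>x. g' x \<noteq> 0 \<Longrightarrow> norm x \<le> R"
      "\<And>x. 0 \<le> g' x"
    and F: "integrable lborel F" "\<And>x. \<bar>g x - g' x\<bar> \<le> F x"
    and "0 \<le> R"
  shows "norm (barycentre g - barycentre g') \<le> 2 * R * integral\<^sup>L lborel F / integral\<^sup>L lborel g"
proof -
  define v' where "v' = barycentre g'"
  define h where "h = (\<lambda>x. (g x - g' x) *\<^sub>R (x - v'))"
  have gx: "integrable lborel (\<lambda>x. g x *\<^sub>R x)" "integrable lborel (\<lambda>x. g' x *\<^sub>R x)"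
    using integrable_scaleR_if_support_bounded g g' by blast+
  have h_eq: "h = (\<lambda>x. (g x *\<^sub>R x - g' x *\<^sub>R x) - (g x - g' x) *\<^sub>R v')"
    unfolding h_def by (auto simp: algebra_simps)
  have "integral\<^sup>L lborel (\<lambda>x. g' x *\<^sub>R x) = integral\<^sup>L lborel g' *\<^sub>R v'"
    using g'(2) by (simp add: v'_def barycentre_def)
  then have diff: "barycentre g - v' = (1 / integral\<^sup>L lborel g) *\<^sub>R integral\<^sup>L lborel h"
    unfolding h_eq using g(1,2) g'(1) gx
    by (simp add: barycentre_def integrable_diff algebra_simps)
  have "norm (h x) \<le> 2 * R * F x" for x
  proof (cases "g x = g' x")
    case True
    then show ?thesis using F(2)[of x] assms(10) by (simp add: h_def)
  next
    case False
    then have "norm x \<le> R"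
      using g(3) g'(3) by (cases "g x = 0") auto
    moreover have "norm v' \<le> R"
      unfolding v'_def using norm_barycentre_le[OF g'(4) g'(3) assms(10)] .
    ultimately have "norm (x - v') \<le> 2 * R"
      using norm_triangle_ineq4[of x v'] by linarith
    moreover have "0 \<le> F x"
      using F(2)[of x] by linarith
    ultimately have "\<bar>g x - g' x\<bar> * norm (x - v') \<le> F x * (2 * R)"
      using F(2)[of x] by (intro mult_mono) auto
    then show ?thesis
      by (simp add: h_def ac_simps)
  qed
  moreover have "integrable lborel h"
    unfolding h_eq using g(1) g'(1) gx by auto
  ultimately have "norm (integral\<^sup>L lborel h) \<le> integral\<^sup>L lborel (\<lambda>x. 2 * R * F x)"
    using F(1) by (intro Bochner_Integration.integral_norm_bound_integral) auto
  then have "norm (integral\<^sup>L lborel h) \<le> 2 * R * integral\<^sup>L lborel F"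
    by simp
  then show ?thesis
    using g(2) diff unfolding v'_def by (simp add: divide_right_mono)
qed

definition vweight :: "'a::euclidean_space set \<Rightarrow> ('a \<Rightarrow> real) \<Rightarrow> ('a \<Rightarrow> real) \<Rightarrow> real \<Rightarrow> 'a \<Rightarrow> 'a \<Rightarrow> real"
  where "vweight \<Omega> p0 p1 t z \<delta> =
    indicator (S_set \<Omega> t z) \<delta> * (p0 (z - t *\<^sub>R \<delta>) * p1 (z + (1 - t) *\<^sub>R \<delta>))"

lemma vfield_eq_barycentre: "vfield \<Omega> p0 p1 t z = barycentre (vweight \<Omega> p0 p1 t z)"
  unfolding vfield_def barycentre_def set_lebesgue_integral_def vweight_def by simp

lemma mem_S_set_if_vweight_nonzero: "vweight \<Omega> p0 p1 t z \<delta> \<noteq> 0 \<Longrightarrow> \<delta> \<in> S_set \<Omega> t z"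
  by (auto simp: vweight_def indicator_def)

lemma vweight_nonneg:
  assumes "\<forall>x\<in>\<Omega>. 0 \<le> p0 x" "\<forall>x\<in>\<Omega>. 0 \<le> p1 x"
  shows "0 \<le> vweight \<Omega> p0 p1 t z \<delta>"
  using assms by (auto simp: vweight_def S_set_def indicator_def)

lemma vweight_bounds:
  assumes "\<forall>x\<in>\<Omega>. plo \<le> p0 x \<and> p0 x \<le> phi \<and> plo \<le> p1 x \<and> p1 x \<le> phi" "0 \<le> plo"
    and "\<delta> \<in> S_set \<Omega> t z"
  shows "plo\<^sup>2 \<le> vweight \<Omega> p0 p1 t z \<delta>" "vweight \<Omega> p0 p1 t z \<delta> \<le> phi\<^sup>2"
proof -
  have ends: "z - t *\<^sub>R \<delta> \<in> \<Omega>" "z + (1 - t) *\<^sub>R \<delta> \<in> \<Omega>"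
    using assms(3) by (auto simp: S_set_def)
  have w: "vweight \<Omega> p0 p1 t z \<delta> = p0 (z - t *\<^sub>R \<delta>) * p1 (z + (1 - t) *\<^sub>R \<delta>)"
    using assms(3) by (simp add: vweight_def)
  show "plo\<^sup>2 \<le> vweight \<Omega> p0 p1 t z \<delta>" "vweight \<Omega> p0 p1 t z \<delta> \<le> phi\<^sup>2"
    unfolding w power2_eq_square using assms(1,2) ends by (intro mult_mono; force)+
qed

lemma integrable_vweight:
  assumes "compact \<Omega>" "p0 \<in> borel_measurable lborel" "p1 \<in> borel_measurable lborel"
    and "\<forall>x\<in>\<Omega>. plo \<le> p0 x \<and> p0 x \<le> phi \<and> plo \<le> p1 x \<and> p1 x \<le> phi" "0 \<le> plo"
  shows "integrable lborel (vweight \<Omega> p0 p1 t z)"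
proof (rule Bochner_Integration.integrable_bound)
  let ?S = "S_set \<Omega> t z"
  have [measurable]: "?S \<in> sets lborel"
    using sets_lborel_S_set[OF assms(1)] .
  have "emeasure lborel ?S < \<infinity>"
    using compact_S_set[OF assms(1)] by (rule emeasure_compact_finite)
  then show "integrable lborel (\<lambda>\<delta>. phi\<^sup>2 * indicator ?S \<delta> :: real)"
    using sets_lborel_S_set[OF assms(1)] by simp
  have [measurable]: "p0 \<in> borel_measurable borel" "p1 \<in> borel_measurable borel"
    using assms(2,3) by auto
  show "vweight \<Omega> p0 p1 t z \<in> borel_measurable lborel"
    unfolding vweight_def by measurable
  have nonneg: "0 \<le> vweight \<Omega> p0 p1 t z \<delta>" for \<delta>
    using assms(4,5) by (auto intro!: vweight_nonneg intro: order_trans[of 0 plo])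
  have "\<bar>vweight \<Omega> p0 p1 t z \<delta>\<bar> \<le> phi\<^sup>2 * indicator ?S \<delta>" for \<delta>
    using nonneg[of \<delta>] vweight_bounds(2)[OF assms(4,5), of \<delta> t z]
    by (cases "\<delta> \<in> ?S") (auto simp: vweight_def)
  then show "AE \<delta> in lborel. norm (vweight \<Omega> p0 p1 t z \<delta>) \<le> norm (phi\<^sup>2 * indicator ?S \<delta> :: real)"
    by (auto simp: abs_mult)
qed

lemma norm_vfield_le_diameter:
  assumes "bounded \<Omega>" "\<forall>x\<in>\<Omega>. 0 \<le> p0 x" "\<forall>x\<in>\<Omega>. 0 \<le> p1 x"
  shows "norm (vfield \<Omega> p0 p1 t z) \<le> diameter \<Omega>"
  unfolding vfield_eq_barycentre
  by (rule norm_barycentre_le[OF vweight_nonneg[OF assms(2,3)]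
        norm_le_diameter_if_mem_S_set[OF assms(1) mem_S_set_if_vweight_nonzero]
        diameter_ge_0[OF assms(1)]])

lemma measure_S_set_le_integral_vweight:
  assumes "compact \<Omega>" "p0 \<in> borel_measurable lborel" "p1 \<in> borel_measurable lborel"
    and "\<forall>x\<in>\<Omega>. plo \<le> p0 x \<and> p0 x \<le> phi \<and> plo \<le> p1 x \<and> p1 x \<le> phi" "0 \<le> plo"
  shows "plo\<^sup>2 * measure lborel (S_set \<Omega> t z) \<le> integral\<^sup>L lborel (vweight \<Omega> p0 p1 t z)"
proof -
  let ?S = "S_set \<Omega> t z"
  have "emeasure lborel ?S < \<infinity>"
    using compact_S_set[OF assms(1)] by (rule emeasure_compact_finite)
  then have "integrable lborel (indicator ?S :: 'a \<Rightarrow> real)"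
    using sets_lborel_S_set[OF assms(1)] by simp
  moreover have "plo\<^sup>2 * indicator ?S \<delta> \<le> vweight \<Omega> p0 p1 t z \<delta>" for \<delta>
    using vweight_bounds(1)[OF assms(4,5), of \<delta> t z] by (cases "\<delta> \<in> ?S") (auto simp: vweight_def)
  ultimately have "integral\<^sup>L lborel (\<lambda>\<delta>. plo\<^sup>2 * indicator ?S \<delta> :: real)
      \<le> integral\<^sup>L lborel (vweight \<Omega> p0 p1 t z)"
    using integrable_vweight[OF assms] by (intro integral_mono) auto
  then show ?thesis
    by simp
qed

lemma measure_S_set_pos:
  assumes "compact \<Omega>" "cball z \<epsilon> \<subseteq> \<Omega>" "0 < \<epsilon>" "0 \<le> t" "t \<le> 1"
  shows "0 < measure lborel (S_set \<Omega> t z)"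
proof -
  have "measure lborel (cball (0::'a) \<epsilon>) \<le> measure lborel (S_set \<Omega> t z)"
    using cball_subset_S_set[OF assms(2,4,5)] compact_S_set[OF assms(1)]
    by (intro measure_mono_fmeasurable) (auto simp: fmeasurable_compact)
  then show ?thesis
    by (rule less_le_trans[OF content_cball_pos[OF assms(3)]])
qed

lemma abs_mult_diff_le_relative_error:
  fixes a b a' b' w :: real
  assumes "0 < a" "0 < b" "\<bar>a' / a - 1\<bar> \<le> w" "\<bar>b' / b - 1\<bar> \<le> w"
  shows "\<bar>a * b - a' * b'\<bar> \<le> (2 * w + w\<^sup>2) * (a * b)"
proof -
  define r s where "r = a' / a - 1" and "s = b' / b - 1"
  have "a * b - a' * b' = - (a * b) * (r + s + r * s)"
    using assms(1,2) by (simp add: r_def s_def field_simps)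
  then have "\<bar>a * b - a' * b'\<bar> = (a * b) * \<bar>r + s + r * s\<bar>"
    using assms(1,2) by (simp add: abs_mult)
  moreover have "\<bar>r * s\<bar> \<le> w * w"
    unfolding abs_mult using assms(3,4) by (intro mult_mono) (auto simp: r_def s_def)
  then have "\<bar>r + s + r * s\<bar> \<le> 2 * w + w\<^sup>2"
    using assms(3,4) by (simp add: r_def s_def power2_eq_square)
  ultimately show ?thesis
    using assms(1,2) by (simp add: mult.commute mult_left_mono)
qed

definition bounds_ratio_modulus :: "'a::real_normed_vector set \<Rightarrow> ('a \<Rightarrow> real) \<Rightarrow> ('a \<Rightarrow> real) \<Rightarrow> real \<Rightarrow> real \<Rightarrow> bool"
  where "bounds_ratio_modulus \<Omega> p0 p1 \<eta> w \<longleftrightarrow>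
    (\<forall>x\<in>\<Omega>. \<forall>y\<in>\<Omega>. norm (x - y) \<le> \<eta> \<longrightarrow> \<bar>p0 x / p0 y - 1\<bar> \<le> w \<and> \<bar>p1 x / p1 y - 1\<bar> \<le> w)"

lemma bounds_ratio_modulus_nonneg:
  assumes "bounds_ratio_modulus \<Omega> p0 p1 \<eta> w" "x \<in> \<Omega>" "0 \<le> \<eta>"
  shows "0 \<le> w"
proof -
  have "\<bar>p0 x / p0 x - 1\<bar> \<le> w"
    using assms unfolding bounds_ratio_modulus_def by (metis diff_self norm_zero)
  then show ?thesis
    by (rule order_trans[OF abs_ge_zero])
qed

lemma bounds_ratio_modulus_omega:
  assumes "\<forall>x\<in>\<Omega>. plo \<le> p0 x \<and> p0 x \<le> phi \<and> plo \<le> p1 x \<and> p1 x \<le> phi" "0 < plo"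
  shows "bounds_ratio_modulus \<Omega> p0 p1 \<eta> (omega \<Omega> p0 p1 \<eta>)"
  unfolding bounds_ratio_modulus_def
proof (intro ballI impI)
  fix x y
  assume xy: "x \<in> \<Omega>" "y \<in> \<Omega>" "norm (x - y) \<le> \<eta>"
  let ?V = "(\<lambda>(z, z'). max \<bar>p0 z / p0 z' - 1\<bar> \<bar>p1 z / p1 z' - 1\<bar>) `
          {(z, z'). z \<in> \<Omega> \<and> z' \<in> \<Omega> \<and> norm (z - z') \<le> \<eta>}"
  have ratio_le: "\<bar>p u / p u' - 1\<bar> \<le> phi / plo + 1"
    if "plo \<le> p u" "p u \<le> phi" "plo \<le> p u'" for p :: "'a \<Rightarrow> real" and u u'
  proof -
    have "0 \<le> p u / p u'" "p u / p u' \<le> phi / plo"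
      using that assms(2) by (auto intro: frac_le)
    then show ?thesis
      by linarith
  qed
  have "bdd_above ?V"
    using assms(1) ratio_le[of p0] ratio_le[of p1] by (intro bdd_aboveI[of _ "phi / plo + 1"]) auto
  moreover have "max \<bar>p0 x / p0 y - 1\<bar> \<bar>p1 x / p1 y - 1\<bar> \<in> ?V"
    using xy by force
  ultimately have "max \<bar>p0 x / p0 y - 1\<bar> \<bar>p1 x / p1 y - 1\<bar> \<le> omega \<Omega> p0 p1 \<eta>"
    unfolding omega_def by (intro cSup_upper)
  then show "\<bar>p0 x / p0 y - 1\<bar> \<le> omega \<Omega> p0 p1 \<eta> \<and> \<bar>p1 x / p1 y - 1\<bar> \<le> omega \<Omega> p0 p1 \<eta>"
    by simp
qed

lemma abs_vweight_diff_le: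
  assumes bounds: "\<forall>x\<in>\<Omega>. plo \<le> p0 x \<and> p0 x \<le> phi \<and> plo \<le> p1 x \<and> p1 x \<le> phi" "0 < plo"
    and ratio: "bounds_ratio_modulus \<Omega> p0 p1 \<eta> w"
    and "norm (z - z') \<le> \<eta>" "0 \<le> w"
  shows "\<bar>vweight \<Omega> p0 p1 t z \<delta> - vweight \<Omega> p0 p1 t z' \<delta>\<bar>
    \<le> (2 * w + w\<^sup>2) * vweight \<Omega> p0 p1 t z \<delta>
      + phi\<^sup>2 * (indicator (S_set \<Omega> t z - S_set \<Omega> t z') \<delta> + indicator (S_set \<Omega> t z' - S_set \<Omega> t z) \<delta>)"
proof -
  let ?g = "vweight \<Omega> p0 p1 t z" and ?g' = "vweight \<Omega> p0 p1 t z'"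
  have nonneg: "0 \<le> ?g \<delta>" "0 \<le> ?g' \<delta>"
    using bounds by (auto intro!: vweight_nonneg intro: order_trans[of 0 plo])
  consider "\<delta> \<in> S_set \<Omega> t z" "\<delta> \<in> S_set \<Omega> t z'" | "\<delta> \<notin> S_set \<Omega> t z \<or> \<delta> \<notin> S_set \<Omega> t z'"
    by blast
  then show ?thesis
  proof cases
    case 1
    then have ends: "z - t *\<^sub>R \<delta> \<in> \<Omega>" "z + (1 - t) *\<^sub>R \<delta> \<in> \<Omega>"
        "z' - t *\<^sub>R \<delta> \<in> \<Omega>" "z' + (1 - t) *\<^sub>R \<delta> \<in> \<Omega>"
      by (auto simp: S_set_def)
    then have "0 < p0 (z - t *\<^sub>R \<delta>)" "0 < p1 (z + (1 - t) *\<^sub>R \<delta>)"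
      using bounds by (auto intro: less_le_trans)
    moreover have "norm ((z' - t *\<^sub>R \<delta>) - (z - t *\<^sub>R \<delta>)) \<le> \<eta>"
        "norm ((z' + (1 - t) *\<^sub>R \<delta>) - (z + (1 - t) *\<^sub>R \<delta>)) \<le> \<eta>"
      using assms(4) by (simp_all add: norm_minus_commute)
    ultimately have "\<bar>?g \<delta> - ?g' \<delta>\<bar> \<le> (2 * w + w\<^sup>2) * ?g \<delta>"
      using 1 ends ratio by (simp add: bounds_ratio_modulus_def vweight_def abs_mult_diff_le_relative_error)
    moreover have "0 \<le> phi\<^sup>2 * (indicator (S_set \<Omega> t z - S_set \<Omega> t z') \<delta>
                              + indicator (S_set \<Omega> t z' - S_set \<Omega> t z) \<delta>)"
      by simp
    ultimately show ?thesis
      by linarith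
  next
    case 2
    then have "\<bar>?g \<delta> - ?g' \<delta>\<bar>
        \<le> phi\<^sup>2 * (indicator (S_set \<Omega> t z - S_set \<Omega> t z') \<delta> + indicator (S_set \<Omega> t z' - S_set \<Omega> t z) \<delta>)"
      using nonneg vweight_bounds(2)[OF bounds(1) less_imp_le[OF bounds(2)], of \<delta> t]
      by (auto simp: vweight_def indicator_def)
    moreover have "0 \<le> (2 * w + w\<^sup>2) * ?g \<delta>"
      using nonneg assms(5) by simp
    ultimately show ?thesis
      by linarith
  qed
qed

lemma norm_vfield_diff_le_measure_sym_diff:
  fixes \<Omega> :: "'a::euclidean_space set"
  assumes "compact \<Omega>"
    and p: "p0 \<in> borel_measurable lborel" "p1 \<in> borel_measurable lborel"
    and bounds: "\<forall>x\<in>\<Omega>. plo \<le> p0 x \<and> p0 x \<le> phi \<and> plo \<le> p1 x \<and> p1 x \<le> phi" "0 < plo"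
    and ratio: "bounds_ratio_modulus \<Omega> p0 p1 \<eta> w" "0 \<le> w" and zz': "norm (z - z') \<le> \<eta>"
    and D: "0 < integral\<^sup>L lborel (vweight \<Omega> p0 p1 t z)" "0 < integral\<^sup>L lborel (vweight \<Omega> p0 p1 t z')"
  shows "norm (vfield \<Omega> p0 p1 t z - vfield \<Omega> p0 p1 t z')
    \<le> 2 * diameter \<Omega> * ((2 * w + w\<^sup>2) + phi\<^sup>2 * (measure lborel (S_set \<Omega> t z - S_set \<Omega> t z')
        + measure lborel (S_set \<Omega> t z' - S_set \<Omega> t z)) / integral\<^sup>L lborel (vweight \<Omega> p0 p1 t z))"
proof -
  define S S' where "S = S_set \<Omega> t z" and "S' = S_set \<Omega> t z'"
  define g g' where "g = vweight \<Omega> p0 p1 t z" and "g' = vweight \<Omega> p0 p1 t z'"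
  define F where "F = (\<lambda>\<delta>. (2 * w + w\<^sup>2) * g \<delta> + phi\<^sup>2 * (indicator (S - S') \<delta> + indicator (S' - S) \<delta>))"
  have diam: "0 \<le> diameter \<Omega>"
    using assms(1) by (simp add: compact_imp_bounded diameter_ge_0)
  have g: "integrable lborel g" "integrable lborel g'"
    unfolding g_def g'_def using bounds by (auto intro!: integrable_vweight assms(1) p)
  have "A - B \<in> sets lborel" "emeasure lborel (A - B) < \<infinity>" if "compact A" "compact B" for A B :: "'a set"
    using that emeasure_mono[of "A - B" A lborel] emeasure_compact_finite[OF that(1)]
    by (auto simp: borel_compact)
  moreover have "compact S" "compact S'"
    unfolding S_def S'_def using assms(1) by (auto intro: compact_S_set)
  ultimately have F: "integrable lborel F"
    "integral\<^sup>L lborel F = (2 * w + w\<^sup>2) * integral\<^sup>L lborel g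
                          + phi\<^sup>2 * (measure lborel (S - S') + measure lborel (S' - S))"
    unfolding F_def using g(1) by simp_all
  have "norm (barycentre g - barycentre g') \<le> 2 * diameter \<Omega> * integral\<^sup>L lborel F / integral\<^sup>L lborel g"
  proof (rule norm_barycentre_diff_le[OF g(1) D(1)[folded g_def] _ g(2) D(2)[folded g'_def] _ _ F(1) _ diam])
    show "g x \<noteq> 0 \<Longrightarrow> norm x \<le> diameter \<Omega>" "g' x \<noteq> 0 \<Longrightarrow> norm x \<le> diameter \<Omega>" for x
      unfolding g_def g'_def using assms(1) compact_imp_bounded mem_S_set_if_vweight_nonzero
      by (metis norm_le_diameter_if_mem_S_set)+
    show "0 \<le> g' x" for x
      unfolding g'_def using bounds by (auto intro!: vweight_nonneg intro: order_trans[of 0 plo])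
    show "\<bar>g x - g' x\<bar> \<le> F x" for x
      unfolding g_def g'_def F_def S_def S'_def
      using abs_vweight_diff_le[OF bounds ratio(1) zz' ratio(2)] .
  qed
  also have "\<dots> = 2 * diameter \<Omega> * ((2 * w + w\<^sup>2)
      + phi\<^sup>2 * (measure lborel (S - S') + measure lborel (S' - S)) / integral\<^sup>L lborel g)"
    using D(1) by (simp add: F(2) g_def field_simps)
  finally show ?thesis
    by (simp add: vfield_eq_barycentre g_def g'_def S_def S'_def)
qed

lemma norm_vfield_diff_le:
  fixes \<Omega> :: "'a::euclidean_space set"
  assumes \<Omega>: "compact \<Omega>" "convex \<Omega>"
    and p: "p0 \<in> borel_measurable lborel" "p1 \<in> borel_measurable lborel"
    and bounds: "\<forall>x\<in>\<Omega>. plo \<le> p0 x \<and> p0 x \<le> phi \<and> plo \<le> p1 x \<and> p1 x \<le> phi" "0 < plo"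
    and ratio: "bounds_ratio_modulus \<Omega> p0 p1 \<eta> w"
    and t: "0 \<le> t" "t \<le> 1" and \<eta>: "0 < \<eta>" "\<eta> \<le> \<epsilon> / 2"
    and z: "cball z \<epsilon> \<subseteq> \<Omega>" "cball z' \<epsilon> \<subseteq> \<Omega>" "norm (z - z') \<le> \<eta>"
  shows "norm (vfield \<Omega> p0 p1 t z - vfield \<Omega> p0 p1 t z')
     \<le> 2 * diameter \<Omega> * (2 * w + w\<^sup>2)
       + 2 * diameter \<Omega> * (phi\<^sup>2 / plo\<^sup>2) * ((real DIM('a) * \<eta> / \<epsilon>) * (1 + 2 ^ DIM('a)))"
proof -
  define S S' where "S = S_set \<Omega> t z" and "S' = S_set \<Omega> t z'"
  define D D' where "D = integral\<^sup>L lborel (vweight \<Omega> p0 p1 t z)"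
    and "D' = integral\<^sup>L lborel (vweight \<Omega> p0 p1 t z')"
  define K where "K = (real DIM('a) * \<eta> / \<epsilon>) * (1 + 2 ^ DIM('a))"
  have "z \<in> \<Omega>"
    using z(1) \<eta> by auto
  then have "0 \<le> w"
    using bounds_ratio_modulus_nonneg[OF ratio] \<eta>(1) by simp
  have mS: "0 < measure lborel S" "0 < measure lborel S'"
    unfolding S_def S'_def using \<Omega>(1) z t \<eta> by (auto intro!: measure_S_set_pos)
  have DS: "plo\<^sup>2 * measure lborel S \<le> D" "plo\<^sup>2 * measure lborel S' \<le> D'"
    unfolding D_def D'_def S_def S'_def using bounds
    by (auto intro!: measure_S_set_le_integral_vweight \<Omega>(1) p)
  then have D: "0 < D" "0 < D'"
    using mS bounds(2) by (auto intro: less_le_trans[rotated])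
  have "phi\<^sup>2 * (measure lborel (S - S') + measure lborel (S' - S)) / D \<le> phi\<^sup>2 * (K * measure lborel S) / D"
    unfolding S_def S'_def K_def using measure_S_set_sym_diff_le[OF \<Omega> z(1,2) z(3) \<eta>] D(1)
    by (intro divide_right_mono mult_left_mono) auto
  also have "\<dots> \<le> phi\<^sup>2 * K / plo\<^sup>2"
  proof -
    have "measure lborel S / D \<le> 1 / plo\<^sup>2"
      using DS(1) D(1) bounds(2) by (simp add: field_simps)
    moreover have "0 \<le> phi\<^sup>2 * K"
      using \<eta> by (simp add: K_def)
    ultimately show ?thesis
      using mult_left_mono by fastforce
  qed
  finally have "2 * diameter \<Omega> * ((2 * w + w\<^sup>2) + phi\<^sup>2 * (measure lborel (S - S') + measure lborel (S' - S)) / D)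
      \<le> 2 * diameter \<Omega> * ((2 * w + w\<^sup>2) + phi\<^sup>2 * K / plo\<^sup>2)"
    using diameter_ge_0[OF compact_imp_bounded[OF \<Omega>(1)]] by (intro mult_left_mono) auto
  with norm_vfield_diff_le_measure_sym_diff[OF \<Omega>(1) p bounds ratio \<open>0 \<le> w\<close> z(3) D[unfolded D_def D'_def]]
  have "norm (vfield \<Omega> p0 p1 t z - vfield \<Omega> p0 p1 t z')
      \<le> 2 * diameter \<Omega> * ((2 * w + w\<^sup>2) + phi\<^sup>2 * K / plo\<^sup>2)"
    unfolding S_def S'_def D_def by (rule order_trans)
  also have "\<dots> = 2 * diameter \<Omega> * (2 * w + w\<^sup>2) + 2 * diameter \<Omega> * (phi\<^sup>2 / plo\<^sup>2) * K"
    by (simp add: algebra_simps)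
  finally show ?thesis
    unfolding K_def .
qed

lemma trivial_bound_le_L2_term:
  fixes D R \<epsilon> \<eta> :: real and n :: nat
  assumes "2 * \<epsilon> \<le> D" "\<epsilon> / 2 < \<eta>" "0 < \<epsilon>" "1 \<le> R" "0 < n"
  shows "2 * D \<le> (1 / \<epsilon>\<^sup>2) * R * 3 * real n * 5 ^ (n + 1) * D\<^sup>2 * \<eta>"
proof -
  have "\<epsilon>\<^sup>2 \<le> D * \<eta>"
    using mult_mono[OF assms(1) less_imp_le[OF assms(2)]] assms(1,3) by (simp add: power2_eq_square)
  then have "D \<le> D\<^sup>2 * \<eta> / \<epsilon>\<^sup>2"
    using assms(1,3) by (simp add: le_divide_eq power2_eq_square mult_left_mono mult.assoc)
  moreover have "1 \<le> R * real n"
    using mult_mono[OF assms(4), of 1 "real n"] assms(4,5) by simp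
  then have "1 \<le> R * real n * 5 ^ (n + 1)"
    using mult_mono[of 1 "R * real n" 1 "5 ^ (n + 1)"] one_le_power[of "5::real" "n + 1"] by simp
  ultimately have "2 * D \<le> (R * 3 * real n * 5 ^ (n + 1)) * (D\<^sup>2 * \<eta> / \<epsilon>\<^sup>2)"
    using assms(1,3) by (intro mult_mono) auto
  then show ?thesis
    by (simp add: field_simps)
qed

lemma sym_diff_bound_le_L2_term:
  fixes D R \<epsilon> \<eta> :: real and n :: nat
  assumes "2 * \<epsilon> \<le> D" "0 < \<epsilon>" "0 \<le> \<eta>" "0 \<le> R"
  shows "2 * D * R * ((real n * \<eta> / \<epsilon>) * (1 + 2 ^ n))
    \<le> (1 / \<epsilon>\<^sup>2) * R * 3 * real n * 5 ^ (n + 1) * D\<^sup>2 * \<eta>"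
proof -
  define c where "c = D * R * n * \<eta> / \<epsilon>\<^sup>2"
  have "0 \<le> c"
    using assms by (simp add: c_def)
  have "(2::real) ^ n \<le> 5 ^ n" "(1::real) \<le> 5 ^ n" "(5::real) ^ (n + 1) = 5 * 5 ^ n"
    by (simp_all add: power_mono one_le_power)
  then have "1 + 2 ^ n \<le> (5::real) ^ (n + 1)"
    by linarith
  then have "2 * (1 + 2 ^ n) * \<epsilon> \<le> 2 * \<epsilon> * 5 ^ (n + 1)"
    using mult_left_mono[of "1 + 2 ^ n" "5 ^ (n + 1)" "2 * \<epsilon>"] assms(2) by (simp add: ac_simps)
  also have "\<dots> \<le> 3 * 5 ^ (n + 1) * D"
    using assms(1,2) by simp
  finally have "(2 * (1 + 2 ^ n) * \<epsilon>) * c \<le> (3 * 5 ^ (n + 1) * D) * c"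
    using \<open>0 \<le> c\<close> by (rule mult_right_mono)
  moreover have "2 * D * R * ((real n * \<eta> / \<epsilon>) * (1 + 2 ^ n)) = (2 * (1 + 2 ^ n) * \<epsilon>) * c"
    using assms(2) by (simp add: c_def field_simps power2_eq_square)
  moreover have "(1 / \<epsilon>\<^sup>2) * R * 3 * real n * 5 ^ (n + 1) * D\<^sup>2 * \<eta> = (3 * 5 ^ (n + 1) * D) * c"
    using assms(2) by (simp add: c_def field_simps power2_eq_square)
  ultimately show ?thesis
    by simp
qed

lemma norm_vfield_diff_le_modulus:
  fixes \<Omega> :: "'a::euclidean_space set"
  assumes \<Omega>: "compact \<Omega>" "convex \<Omega>"
    and p: "p0 \<in> borel_measurable lborel" "p1 \<in> borel_measurable lborel"
    and bounds: "\<forall>x\<in>\<Omega>. plo \<le> p0 x \<and> p0 x \<le> phi \<and> plo \<le> p1 x \<and> p1 x \<le> phi" "0 < plo"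
    and ratio: "bounds_ratio_modulus \<Omega> p0 p1 \<eta> w"
    and t: "0 \<le> t" "t \<le> 1" and "0 < \<epsilon>" "0 < \<eta>"
    and z: "z \<in> inner_set \<Omega> \<epsilon>" "z' \<in> inner_set \<Omega> \<epsilon>" "norm (z - z') \<le> \<eta>"
  shows "norm (vfield \<Omega> p0 p1 t z - vfield \<Omega> p0 p1 t z')
    \<le> 9 * diameter \<Omega> * w
      + (1 / \<epsilon>\<^sup>2) * (phi\<^sup>2 / plo\<^sup>2) * 3 * real DIM('a) * 5 ^ (DIM('a) + 1) * (diameter \<Omega>)\<^sup>2 * \<eta>"
    (is "?lhs \<le> 9 * ?d * w + ?G")
proof -
  have cb: "cball z \<epsilon> \<subseteq> \<Omega>" "cball z' \<epsilon> \<subseteq> \<Omega>"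
    using z by (auto simp: inner_set_def)
  have "z \<in> \<Omega>" "bounded \<Omega>"
    using cb \<open>0 < \<epsilon>\<close> compact_imp_bounded[OF \<Omega>(1)] by auto
  then have "0 \<le> w"
    using bounds_ratio_modulus_nonneg[OF ratio] \<open>0 < \<eta>\<close> by auto
  have d\<epsilon>: "2 * \<epsilon> \<le> ?d"
    using diameter_subset[OF cb(1) \<open>bounded \<Omega>\<close>] \<open>0 < \<epsilon>\<close> by simp
  have "plo\<^sup>2 \<le> phi\<^sup>2"
    using bounds \<open>z \<in> \<Omega>\<close> by (intro power_mono) auto
  then have "1 \<le> phi\<^sup>2 / plo\<^sup>2"
    using bounds(2) by simp
  have "norm (vfield \<Omega> p0 p1 t z) \<le> ?d" "norm (vfield \<Omega> p0 p1 t z') \<le> ?d"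
    using bounds \<open>bounded \<Omega>\<close> by (auto intro!: norm_vfield_le_diameter intro: order_trans[of 0 plo])
  then have trivial: "?lhs \<le> 2 * ?d"
    using norm_triangle_ineq4[of "vfield \<Omega> p0 p1 t z" "vfield \<Omega> p0 p1 t z'"] by linarith
  have "0 \<le> ?G" "0 \<le> 9 * ?d * w"
    using \<open>1 \<le> phi\<^sup>2 / plo\<^sup>2\<close> \<open>0 < \<eta>\<close> \<open>0 \<le> w\<close> d\<epsilon> \<open>0 < \<epsilon>\<close> by simp_all
  consider "1 < w" | "\<epsilon> / 2 < \<eta>" | "w \<le> 1" "\<eta> \<le> \<epsilon> / 2"
    by linarith
  then show ?thesis
  proof cases
    case 1
    then show ?thesis
      using trivial \<open>0 \<le> ?G\<close> d\<epsilon> \<open>0 < \<epsilon>\<close> mult_left_mono[of 1 w ?d] by linarith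
  next
    case 2
    then show ?thesis
      using trivial \<open>0 \<le> 9 * ?d * w\<close> trivial_bound_le_L2_term[OF d\<epsilon> 2 \<open>0 < \<epsilon>\<close> \<open>1 \<le> phi\<^sup>2 / plo\<^sup>2\<close> DIM_positive[where 'a = 'a]]
      by linarith
  next
    case 3
    have "w\<^sup>2 \<le> w"
      using mult_left_mono[OF 3(1) \<open>0 \<le> w\<close>] by (simp add: power2_eq_square)
    then have "2 * ?d * (2 * w + w\<^sup>2) \<le> 9 * ?d * w"
      using mult_left_mono[of "2 * w + w\<^sup>2" "9 / 2 * w" "2 * ?d"] d\<epsilon> \<open>0 < \<epsilon>\<close> \<open>0 \<le> w\<close> by simp
    then show ?thesis
      using norm_vfield_diff_le[OF \<Omega> p bounds ratio t \<open>0 < \<eta>\<close> 3(2) cb z(3)]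
        sym_diff_bound_le_L2_term[OF d\<epsilon> \<open>0 < \<epsilon>\<close>, of \<eta> "phi\<^sup>2 / plo\<^sup>2" "DIM('a)"] \<open>0 < \<eta>\<close>
      by simp
  qed
qed

text \<open>At \<open>\<eta> = 0\<close> every ratio in the definition of \<open>omega\<close> is \<open>p x / p x\<close>, which is 1, or 0
  when \<open>p x = 0\<close>; either way \<open>omega \<Omega> p0 p1 0 \<le> 1\<close>, with no assumption on the densities.\<close>
lemma omega_inv1_nonneg:
  assumes "bounded \<Omega>" "\<Omega> \<noteq> {}"
  shows "0 \<le> omega_inv1 \<Omega> p0 p1"
proof -
  have "omega \<Omega> p0 p1 0 \<le> 1"
    unfolding omega_def
  proof (rule cSup_least)
    show "(\<lambda>(z, z'). max \<bar>p0 z / p0 z' - 1\<bar> \<bar>p1 z / p1 z' - 1\<bar>) `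
        {(z, z'). z \<in> \<Omega> \<and> z' \<in> \<Omega> \<and> norm (z - z') \<le> 0} \<noteq> {}"
      using assms(2) by auto
  qed auto
  then have "0 \<in> {\<eta>. 0 \<le> \<eta> \<and> \<eta> \<le> diameter \<Omega> \<and> omega \<Omega> p0 p1 \<eta> \<le> 1}"
    using diameter_ge_0[OF assms(1)] by simp
  moreover have "bdd_above {\<eta>. 0 \<le> \<eta> \<and> \<eta> \<le> diameter \<Omega> \<and> omega \<Omega> p0 p1 \<eta> \<le> 1}"
    by (intro bdd_aboveI[of _ "diameter \<Omega>"]) auto
  ultimately show ?thesis
    unfolding omega_inv1_def by (rule cSup_upper)
qed

lemma density_bounds_Inf_Sup:
  fixes p0 p1 :: "'a \<Rightarrow> real"
  assumes "\<Omega> \<noteq> {}" "bounded (p0 ` \<Omega>)" "bounded (p1 ` \<Omega>)" "\<exists>c>0. \<forall>x\<in>\<Omega>. c \<le> p0 x \<and> c \<le> p1 x"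
  defines "plo \<equiv> Inf ((\<lambda>x. min (p0 x) (p1 x)) ` \<Omega>)" and "phi \<equiv> Sup ((\<lambda>x. max (p0 x) (p1 x)) ` \<Omega>)"
  shows "\<forall>x\<in>\<Omega>. plo \<le> p0 x \<and> p0 x \<le> phi \<and> plo \<le> p1 x \<and> p1 x \<le> phi" "0 < plo"
proof -
  obtain c where c: "0 < c" "\<forall>x\<in>\<Omega>. c \<le> p0 x \<and> c \<le> p1 x"
    using assms(4) by blast
  obtain B0 B1 where "\<forall>x\<in>\<Omega>. norm (p0 x) \<le> B0" "\<forall>x\<in>\<Omega>. norm (p1 x) \<le> B1"
    using assms(2,3) unfolding bounded_iff by blast
  then have "bdd_above ((\<lambda>x. max (p0 x) (p1 x)) ` \<Omega>)"
    by (intro bdd_aboveI[of _ "max B0 B1"]) (force simp: max_def)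
  moreover have "bdd_below ((\<lambda>x. min (p0 x) (p1 x)) ` \<Omega>)"
    using c(2) by (intro bdd_belowI[of _ c]) auto
  ultimately show "\<forall>x\<in>\<Omega>. plo \<le> p0 x \<and> p0 x \<le> phi \<and> plo \<le> p1 x \<and> p1 x \<le> phi"
    unfolding plo_def phi_def by (force intro: cInf_lower2 cSup_upper2)
  have "c \<le> plo"
    unfolding plo_def using assms(1) c(2) by (intro cInf_greatest) auto
  then show "0 < plo"
    using c(1) by linarith
qed

theorem lemma8:
  fixes \<Omega> :: "'a::euclidean_space set" and p0 p1 :: "'a \<Rightarrow> real"
  assumes "compact \<Omega>" and "convex \<Omega>" and "interior \<Omega> \<noteq> {}"
    and "is_density_on \<Omega> p0" and "is_density_on \<Omega> p1"
  shows "(\<forall>z\<in>interior \<Omega>. \<forall>t\<in>{0..1}. norm (vfield \<Omega> p0 p1 t z) \<le> diameter \<Omega>)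
   \<and> ((continuous_on \<Omega> p0 \<and> continuous_on \<Omega> p1
        \<and> bounded (p0 ` \<Omega>) \<and> bounded (p1 ` \<Omega>)
        \<and> (\<exists>c>0. \<forall>x\<in>\<Omega>. c \<le> p0 x \<and> c \<le> p1 x)) \<longrightarrow>
      (let plo = Inf ((\<lambda>x. min (p0 x) (p1 x)) ` \<Omega>);
           phi = Sup ((\<lambda>x. max (p0 x) (p1 x)) ` \<Omega>);
           L1 = 9 * diameter \<Omega>;
           L2 = (\<lambda>\<epsilon>::real. 3 * diameter \<Omega> / omega_inv1 \<Omega> p0 p1
                 + (1 / \<epsilon>\<^sup>2) * (phi\<^sup>2 / plo\<^sup>2) * 3 * real DIM('a) * 5 ^ (DIM('a) + 1)
                   * (diameter \<Omega>)\<^sup>2)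
       in \<forall>t\<in>{0..1}. \<forall>\<epsilon>>0. \<forall>\<eta>>0. \<forall>z\<in>inner_set \<Omega> \<epsilon>. \<forall>z'\<in>inner_set \<Omega> \<epsilon>.
            norm (z - z') \<le> \<eta> \<longrightarrow>
            norm (vfield \<Omega> p0 p1 t z - vfield \<Omega> p0 p1 t z') \<le> L1 * omega \<Omega> p0 p1 \<eta> + L2 \<epsilon> * \<eta>))"
proof (unfold Let_def, intro conjI impI ballI allI)
  show "norm (vfield \<Omega> p0 p1 t z) \<le> diameter \<Omega>" for t z
    using compact_imp_bounded[OF assms(1)] assms(4,5) by (simp add: is_density_on_def norm_vfield_le_diameter)
next
  fix t \<epsilon> \<eta> :: real and z z' :: 'a
  assume H: "continuous_on \<Omega> p0 \<and> continuous_on \<Omega> p1 \<and> bounded (p0 ` \<Omega>) \<and> bounded (p1 ` \<Omega>)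
      \<and> (\<exists>c>0. \<forall>x\<in>\<Omega>. c \<le> p0 x \<and> c \<le> p1 x)"
    and t: "t \<in> {0..1}" and "0 < \<epsilon>" "0 < \<eta>"
    and z: "z \<in> inner_set \<Omega> \<epsilon>" "z' \<in> inner_set \<Omega> \<epsilon>" "norm (z - z') \<le> \<eta>"
  define plo phi where "plo = Inf ((\<lambda>x. min (p0 x) (p1 x)) ` \<Omega>)"
    and "phi = Sup ((\<lambda>x. max (p0 x) (p1 x)) ` \<Omega>)"
  have "\<Omega> \<noteq> {}"
    using assms(3) interior_subset by blast
  moreover have "bounded (p0 ` \<Omega>)" "bounded (p1 ` \<Omega>)" "\<exists>c>0. \<forall>x\<in>\<Omega>. c \<le> p0 x \<and> c \<le> p1 x"
    using H by simp_all
  ultimately have bounds: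
      "\<forall>x\<in>\<Omega>. plo \<le> p0 x \<and> p0 x \<le> phi \<and> plo \<le> p1 x \<and> p1 x \<le> phi" "0 < plo"
    unfolding plo_def phi_def by (rule density_bounds_Inf_Sup)+
  have p: "p0 \<in> borel_measurable lborel" "p1 \<in> borel_measurable lborel"
    using assms(4,5) by (simp_all add: is_density_on_def)
  have "0 \<le> 3 * diameter \<Omega> / omega_inv1 \<Omega> p0 p1 * \<eta>"
    using omega_inv1_nonneg[OF compact_imp_bounded[OF assms(1)] \<open>\<Omega> \<noteq> {}\<close>]
      diameter_ge_0[OF compact_imp_bounded[OF assms(1)]] \<open>0 < \<eta>\<close> by simp
  moreover have "norm (vfield \<Omega> p0 p1 t z - vfield \<Omega> p0 p1 t z') \<le> 9 * diameter \<Omega> * omega \<Omega> p0 p1 \<eta>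
      + (1 / \<epsilon>\<^sup>2) * (phi\<^sup>2 / plo\<^sup>2) * 3 * real DIM('a) * 5 ^ (DIM('a) + 1) * (diameter \<Omega>)\<^sup>2 * \<eta>"
    using norm_vfield_diff_le_modulus[OF assms(1,2) p bounds bounds_ratio_modulus_omega[OF bounds] _ _
        \<open>0 < \<epsilon>\<close> \<open>0 < \<eta>\<close> z] t by simp
  ultimately show "norm (vfield \<Omega> p0 p1 t z - vfield \<Omega> p0 p1 t z') \<le> 9 * diameter \<Omega> * omega \<Omega> p0 p1 \<eta>
      + (3 * diameter \<Omega> / omega_inv1 \<Omega> p0 p1
         + (1 / \<epsilon>\<^sup>2) * (phi\<^sup>2 / plo\<^sup>2) * 3 * real DIM('a) * 5 ^ (DIM('a) + 1) * (diameter \<Omega>)\<^sup>2) * \<eta>"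
    by (simp add: distrib_right)
qed

end
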